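(* For any dimension $d$ and any target accuracy $\epsilon>0$, there exists a ReLU neural network $\mathcal N:\mathbb{R}^d\to\mathbb{R}$ of depth $3$ and width $\mathcal O(d^{2})$, with magnitude of weights bounded by $\frac{12d^4}{\epsilon}$, such that \[ \operatorname*{\mathbb{E}}_{\mathbf{x} \sim \mathcal{U}([0,1]^d)} \left[ \left( \mathcal N(\mathbf{x}) - \operatorname{med}(\mathbf{x})\right)^2 \right] \leq \epsilon . \]
   Context: $\operatorname{med}(\mathbf{x})$ denotes the median of the entries of $\mathbf{x}\in\mathbb{R}^d$, and $\mathcal U([0,1]^d)$ the uniform distribution on the unit hypercube. A ReLU network is a fully connected feed-forward network whose hidden neurons apply $[z]_+=\max\{0,z\}$ after an affine map, followed by an affine output neuron. The depth of a network is the number of hidden layers plus one; the width is the number of neurons in the largest hidden layer. *)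

theory Defs
  imports "HOL-Probability.Probability"
begin

text \<open>Points of R^d are represented as functions nat => real; only the
  coordinates 0..d-1 are relevant.\<close>

definition relu :: "real \<Rightarrow> real" where
  "relu z = max 0 z"

definition med :: "nat \<Rightarrow> (nat \<Rightarrow> real) \<Rightarrow> real" where
  "med d x = (let xs = sort (map x [0..<d]) in
     if odd d then xs ! (d div 2)
     else (xs ! (d div 2 - 1) + xs ! (d div 2)) / 2)"

definition net3 :: "nat \<Rightarrow> nat \<Rightarrow> nat \<Rightarrow> (nat \<Rightarrow> nat \<Rightarrow> real) \<Rightarrow> (nat \<Rightarrow> real)
    \<Rightarrow> (nat \<Rightarrow> nat \<Rightarrow> real) \<Rightarrow> (nat \<Rightarrow> real) \<Rightarrow> (nat \<Rightarrow> real) \<Rightarrow> real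
    \<Rightarrow> (nat \<Rightarrow> real) \<Rightarrow> real" where
  "net3 d k1 k2 W1 b1 W2 b2 w3 b3 x =
     (\<Sum>j<k2. w3 j * relu ((\<Sum>i<k1. W2 j i * relu ((\<Sum>l<d. W1 i l * x l) + b1 i)) + b2 j)) + b3"

definition params_bounded :: "nat \<Rightarrow> nat \<Rightarrow> nat \<Rightarrow> (nat \<Rightarrow> nat \<Rightarrow> real) \<Rightarrow> (nat \<Rightarrow> real)
    \<Rightarrow> (nat \<Rightarrow> nat \<Rightarrow> real) \<Rightarrow> (nat \<Rightarrow> real) \<Rightarrow> (nat \<Rightarrow> real) \<Rightarrow> real \<Rightarrow> real \<Rightarrow> bool" where
  "params_bounded d k1 k2 W1 b1 W2 b2 w3 b3 B \<longleftrightarrow>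
     (\<forall>i<k1. \<forall>l<d. \<bar>W1 i l\<bar> \<le> B) \<and> (\<forall>i<k1. \<bar>b1 i\<bar> \<le> B) \<and>
     (\<forall>j<k2. \<forall>i<k1. \<bar>W2 j i\<bar> \<le> B) \<and> (\<forall>j<k2. \<bar>b2 j\<bar> \<le> B) \<and>
     (\<forall>j<k2. \<bar>w3 j\<bar> \<le> B) \<and> \<bar>b3\<bar> \<le> B"

definition unif_cube :: "nat \<Rightarrow> (nat \<Rightarrow> real) measure" where
  "unif_cube d = PiM {..<d} (\<lambda>_. uniform_measure lborel {0..1::real})"

end

theory Submission
  imports Defs
begin

text \<open>If the coordinates of x are pairwise at least 1/M apart, the ramp
  relu(M t) - relu(M t - 1) is exactly the indicator of t > 0, so summing ramps computes the
  rank of every coordinate. A trapezoid gate in the rank then lets x i through exactly when its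
  rank is a median index, and averaging the gates for the two median indices gives the median
  exactly. The network output is bounded by d, so its squared error is at most 4 d^2, and it is
  nonzero only when two coordinates are 1/M-close, which has probability at most 3 d^2 / M.
  The expected squared error is thus at most 12 d^4 / M, and one takes M = 12 d^4 / \<epsilon>.\<close>

section \<open>Order statistics and the median\<close>

abbreviation sorted_coords :: "nat \<Rightarrow> (nat \<Rightarrow> 'a::linorder) \<Rightarrow> 'a list" where
  "sorted_coords d x \<equiv> sort (map x [0..<d])"

definition count_below :: "nat \<Rightarrow> (nat \<Rightarrow> 'a::linorder) \<Rightarrow> 'a \<Rightarrow> nat" where
  "count_below d x y = card {j. j < d \<and> x j < y}"

lemma count_below_eq_sorted:
  "count_below d x y = card {p. p < d \<and> sorted_coords d x ! p < y}"
proof -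
  have "count_below d x y = length (filter (\<lambda>z. z < y) (map x [0..<d]))"
    unfolding count_below_def by (simp add: length_filter_conv_card) (intro arg_cong[where f=card], auto)
  also have "\<dots> = length (filter (\<lambda>z. z < y) (sorted_coords d x))"
    by (metis mset_filter mset_sort size_mset)
  finally show ?thesis by (simp add: length_filter_conv_card)
qed

lemma count_below_le_iff:
  assumes "r < d"
  shows "count_below d x y \<le> r \<longleftrightarrow> y \<le> sorted_coords d x ! r"
proof
  let ?L = "sorted_coords d x"
  assume le: "count_below d x y \<le> r"
  show "y \<le> ?L ! r"
  proof (rule ccontr)
    assume "\<not> y \<le> ?L ! r"
    moreover have "?L ! p \<le> ?L ! r" if "p \<le> r" for p
      using that assms by (intro sorted_nth_mono) simp_all
    ultimately have "{..r} \<subseteq> {p. p < d \<and> ?L ! p < y}"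
      using assms by fastforce
    then have "card {..r} \<le> count_below d x y"
      unfolding count_below_eq_sorted by (intro card_mono) auto
    with le show False
      by simp
  qed
next
  let ?L = "sorted_coords d x"
  assume y: "y \<le> ?L ! r"
  have "?L ! r \<le> ?L ! p" if "r \<le> p" "p < d" for p
    using that by (intro sorted_nth_mono) simp_all
  then have "{p. p < d \<and> ?L ! p < y} \<subseteq> {..<r}"
    using y by (force simp: not_less[symmetric])
  then have "count_below d x y \<le> card {..<r}"
    unfolding count_below_eq_sorted by (intro card_mono) auto
  then show "count_below d x y \<le> r"
    by simp
qed

lemma sorted_coords_nth_in_image:
  "r < d \<Longrightarrow> sorted_coords d x ! r \<in> x ` {..<d}"
  using nth_mem[of r "sorted_coords d x"] by auto

lemma count_below_sorted_coords_nth: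
  assumes inj: "inj_on x {..<d}" and q: "q < d"
  shows "count_below d x (sorted_coords d x ! q) = q"
proof -
  let ?L = "sorted_coords d x"
  have "sorted_wrt (<) ?L"
    using inj by (simp add: strict_sorted_iff distinct_map atLeast0LessThan)
  then have "?L ! p < ?L ! q" if "p < q" for p
    using that q by (simp add: sorted_wrt_nth_less)
  then have above: "\<not> count_below d x (?L ! q) \<le> p" if "p < q" for p
    using that q by (simp add: count_below_le_iff not_le)
  have "count_below d x (?L ! q) \<le> q"
    using q by (simp add: count_below_le_iff)
  with above[of "q - 1"] show ?thesis
    by (cases q) auto
qed

lemma sum_coords_of_rank:
  fixes x :: "nat \<Rightarrow> 'a::{linorder, comm_monoid_add}"
  assumes inj: "inj_on x {..<d}" and r: "r < d"
  shows "(\<Sum>i<d. if count_below d x (x i) = r then x i else 0) = sorted_coords d x ! r"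
proof -
  let ?L = "sorted_coords d x"
  obtain i0 where i0: "i0 < d" "?L ! r = x i0"
    using sorted_coords_nth_in_image[OF r] by auto
  have "count_below d x (x i) = r \<longleftrightarrow> i = i0" if i: "i < d" for i
  proof -
    have "x i \<in> set ?L"
      using i by simp
    then obtain q where "q < length ?L" "x i = ?L ! q"
      by (metis in_set_conv_nth)
    then have q: "q < d" "x i = ?L ! q"
      by simp_all
    have "distinct ?L"
      using inj by (simp add: distinct_map atLeast0LessThan)
    from nth_eq_iff_index_eq[OF this] have "q = r \<longleftrightarrow> x i = x i0"
      using q r i0(2)[symmetric] by simp
    also have "\<dots> \<longleftrightarrow> i = i0"
      using inj i i0 by (auto dest: inj_onD)
    finally show ?thesis
      using count_below_sorted_coords_nth[OF inj q(1)] q(2) by simp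
  qed
  then have "(\<Sum>i<d. if count_below d x (x i) = r then x i else 0) = (\<Sum>i<d. if i = i0 then x i else 0)"
    by (intro sum.cong) auto
  then show ?thesis using i0 by simp
qed

text \<open>The r-th order statistic written with Max, Min and comparisons only, so that
  its measurability is automatic.\<close>
definition order_stat :: "nat \<Rightarrow> (nat \<Rightarrow> 'a::linorder) \<Rightarrow> nat \<Rightarrow> 'a" where
  "order_stat d x r =
     Max ((\<lambda>i. if count_below d x (x i) \<le> r then x i else Min (x ` {..<d})) ` {..<d})"

lemma sorted_coords_nth_eq_order_stat:
  assumes r: "r < d"
  shows "sorted_coords d x ! r = order_stat d x r"
proof -
  let ?y = "sorted_coords d x ! r"
  obtain i0 where i0: "i0 < d" "?y = x i0"
    using sorted_coords_nth_in_image[OF r] by auto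
  have "Min (x ` {..<d}) \<le> ?y"
    using i0 by (intro Min_le) auto
  then show ?thesis
    unfolding order_stat_def using i0 r
    by (intro Max_eqI[symmetric]) (auto simp: count_below_le_iff intro!: image_eqI[of _ _ i0])
qed

lemma measurable_order_stat [measurable]:
  "(\<lambda>x. order_stat d x r) \<in> borel_measurable (unif_cube d)"
proof -
  have count: "count_below d x y = (\<Sum>j<d. if x j < y then 1 else 0)" for x :: "nat \<Rightarrow> real" and y
    by (simp add: count_below_def sum.If_cases Int_def conj_commute)
  show ?thesis
    unfolding order_stat_def count unif_cube_def by measurable
qed

lemma med_eq_sorted_coords:
  assumes "1 \<le> d"
  shows "med d x = (sorted_coords d x ! ((d - 1) div 2) + sorted_coords d x ! (d div 2)) / 2"
proof -
  have "(d - 1) div 2 = (if odd d then d div 2 else d div 2 - 1)"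
    using assms by presburger
  then show ?thesis
    by (simp add: med_def Let_def)
qed

lemma measurable_med [measurable]:
  assumes "1 \<le> d"
  shows "(\<lambda>x. med d x) \<in> borel_measurable (unif_cube d)"
  using assms by (simp add: med_eq_sorted_coords sorted_coords_nth_eq_order_stat)

lemma med_between:
  assumes "1 \<le> d" and "\<forall>i<d. a \<le> x i \<and> x i \<le> b"
  shows "a \<le> med d x \<and> med d x \<le> b"
proof -
  have bounds: "a \<le> sorted_coords d x ! r \<and> sorted_coords d x ! r \<le> b" if "r < d" for r
    using sorted_coords_nth_in_image[OF that, of x] assms(2) by auto
  have lower: "(d - 1) div 2 < d" and upper: "d div 2 < d"
    using assms(1) by auto
  from bounds[OF lower] bounds[OF upper] show ?thesis
    unfolding med_eq_sorted_coords[OF assms(1)] by auto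
qed

section \<open>Close coordinates in the uniform cube\<close>

abbreviation unif01 :: "real measure" where
  "unif01 \<equiv> uniform_measure lborel {0..1}"

lemma prob_space_unif01: "prob_space unif01"
  by (rule prob_space_uniform_measure) auto

lemma prob_space_unif_cube: "prob_space (unif_cube d)"
  unfolding unif_cube_def by (intro prob_space_PiM prob_space_unif01)

lemma AE_unif_cube_unit:
  "AE x in unif_cube d. \<forall>i<d. 0 \<le> x i \<and> x i \<le> 1"
proof -
  have "AE x in unif_cube d. \<forall>i\<in>{..<d}. 0 \<le> x i \<and> x i \<le> 1"
    unfolding unif_cube_def using prob_space_unif01
    by (intro AE_finite_allI AE_PiM_component[where P="\<lambda>t. 0 \<le> t \<and> t \<le> 1"]
        AE_uniform_measureI) auto
  then show ?thesis
    by (simp add: Ball_def)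
qed

lemma measure_unif01_le_lborel:
  assumes "A \<in> sets borel" and "bounded A"
  shows "measure unif01 A \<le> measure lborel A"
proof -
  have "emeasure unif01 A \<le> emeasure lborel A"
    using assms(1) by (simp add: divide_ennreal_def emeasure_mono)
  then show ?thesis
    using emeasure_bounded_finite[OF assms(2)] unfolding measure_def by (simp add: enn2real_mono)
qed

lemma measure_unif_cube_two_coords:
  assumes "i < d" "j < d" "i \<noteq> j" and "A \<in> sets borel" "B \<in> sets borel"
  shows "measure (unif_cube d) {x \<in> space (unif_cube d). x i \<in> A \<and> x j \<in> B} =
    measure unif01 A * measure unif01 B"
proof -
  let ?C = "\<lambda>l. if l = i then A else B"
  have "{x \<in> space (unif_cube d). x i \<in> A \<and> x j \<in> B} =
      prod_emb {..<d} (\<lambda>_. unif01) {i, j} (Pi\<^sub>E {i, j} ?C)"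
    using assms by (auto simp: prod_emb_def unif_cube_def space_PiM PiE_iff extensional_def)
  moreover have "emeasure (unif_cube d) (prod_emb {..<d} (\<lambda>_. unif01) {i, j} (Pi\<^sub>E {i, j} ?C)) =
      emeasure unif01 A * emeasure unif01 B"
    unfolding unif_cube_def using assms prob_space_unif01 by (subst emeasure_PiM_emb) auto
  ultimately show ?thesis
    by (simp add: measure_def enn2real_mult)
qed

lemma unit_interval_grid:
  fixes t :: real
  assumes "0 \<le> t" "t \<le> 1" "0 < K"
  shows "\<exists>k<K. real k / K \<le> t \<and> t \<le> (real k + 1) / K"
proof (cases "t = 1")
  case True
  then show ?thesis
    using assms by (intro exI[of _ "K - 1"]) (auto simp: of_nat_diff)
next
  case False
  define k where "k = nat \<lfloor>t * K\<rfloor>"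
  have k: "real k \<le> t * K" "t * K < real k + 1"
    using assms by (simp_all add: k_def)
  moreover have "t * K < K"
    using assms False by simp
  then have "k < K"
    using k by linarith
  ultimately show ?thesis
    using assms by (intro exI[of _ k]) (auto simp: field_simps)
qed

lemma measure_unif_cube_strip_box:
  assumes "i < d" "j < d" "i \<noteq> j" "a \<le> b" "0 \<le> \<delta>"
  shows "measure (unif_cube d) {x \<in> space (unif_cube d). x i \<in> {a - \<delta> <..< b + \<delta>} \<and> x j \<in> {a..b}}
    \<le> (b - a + 2 * \<delta>) * (b - a)"
proof -
  have "measure (unif_cube d) {x \<in> space (unif_cube d). x i \<in> {a - \<delta> <..< b + \<delta>} \<and> x j \<in> {a..b}} =
      measure unif01 {a - \<delta> <..< b + \<delta>} * measure unif01 {a..b}"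
    using assms by (intro measure_unif_cube_two_coords) auto
  also have "\<dots> \<le> measure lborel {a - \<delta> <..< b + \<delta>} * measure lborel {a..b}"
    by (intro mult_mono measure_unif01_le_lborel) auto
  also have "\<dots> = (b - a + 2 * \<delta>) * (b - a)"
    using assms by simp
  finally show ?thesis .
qed

definition close_pair_event :: "nat \<Rightarrow> real \<Rightarrow> nat \<Rightarrow> nat \<Rightarrow> (nat \<Rightarrow> real) set" where
  "close_pair_event d \<delta> i j =
     {x \<in> space (unif_cube d). 0 \<le> x j \<and> x j \<le> 1 \<and> \<bar>x i - x j\<bar> < \<delta>}"

text \<open>The event is covered by K \<approx> 1/\<delta> boxes: x j lies in one of K grid cells of
  [0,1] (hence the constraint on x j, which holds almost surely) and x i within \<delta> of that
  cell.\<close>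
lemma measure_close_pair_event:
  assumes ij: "i < d" "j < d" "i \<noteq> j" and \<delta>: "0 < \<delta>"
  shows "measure (unif_cube d) (close_pair_event d \<delta> i j) \<le> 3 * \<delta>"
proof -
  interpret prob_space "unif_cube d"
    by (rule prob_space_unif_cube)
  define K where "K = nat \<lceil>1 / \<delta>\<rceil>"
  have K_ge: "1 / \<delta> \<le> real K"
    unfolding K_def by (rule real_nat_ceiling_ge)
  have "0 < 1 / \<delta>"
    using \<delta> by simp
  then have K_pos: "0 < real K"
    using K_ge by (rule less_le_trans)
  have K_inv: "1 / K \<le> \<delta>"
    using le_imp_inverse_le[OF K_ge] \<delta> by (simp add: inverse_eq_divide)
  define box where "box k = {x \<in> space (unif_cube d).
    x i \<in> {real k / K - \<delta> <..< (real k + 1) / K + \<delta>} \<and> x j \<in> {real k / K .. (real k + 1) / K}}"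
    for k
  have box_sets: "box k \<in> sets (unif_cube d)" for k
    unfolding box_def unif_cube_def using ij by (intro sets.sets_Collect_conj sets_Collect_single) auto
  have box_measure: "measure (unif_cube d) (box k) \<le> (1 / K + 2 * \<delta>) * (1 / K)" for k
  proof -
    have "real k / K \<le> (real k + 1) / K" "(real k + 1) / K - real k / K = 1 / K"
      using K_pos by (simp_all add: divide_right_mono diff_divide_distrib[symmetric])
    then show ?thesis
      using measure_unif_cube_strip_box[OF ij, of "real k / K" "(real k + 1) / K" \<delta>] \<delta>
      unfolding box_def by simp
  qed
  have "close_pair_event d \<delta> i j \<subseteq> (\<Union>k<K. box k)"
  proof
    fix x
    assume x: "x \<in> close_pair_event d \<delta> i j"
    then obtain k where "k < K" "real k / K \<le> x j" "x j \<le> (real k + 1) / K"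
      using unit_interval_grid[of "x j" K] K_pos by (auto simp: close_pair_event_def)
    with x show "x \<in> (\<Union>k<K. box k)"
      by (auto simp: close_pair_event_def box_def intro!: bexI[of _ k])
  qed
  then have "measure (unif_cube d) (close_pair_event d \<delta> i j) \<le> measure (unif_cube d) (\<Union>k<K. box k)"
    using box_sets by (intro finite_measure_mono) auto
  also have "\<dots> \<le> (\<Sum>k<K. measure (unif_cube d) (box k))"
    using box_sets by (intro measure_UNION_le) auto
  also have "\<dots> \<le> (\<Sum>k<K. (1 / K + 2 * \<delta>) * (1 / K))"
    by (rule sum_mono) (rule box_measure)
  also have "\<dots> = 1 / K + 2 * \<delta>"
    using K_pos by simp
  also have "\<dots> \<le> 3 * \<delta>"
    using K_inv by simp
  finally show ?thesis .
qed

lemma measurable_unif_cube_component: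
  assumes "j < d"
  shows "(\<lambda>x. x j) \<in> borel_measurable (unif_cube d)"
proof -
  have "(\<lambda>x. x j) \<in> measurable (unif_cube d) unif01"
    unfolding unif_cube_def using assms by (intro measurable_component_singleton) auto
  then show ?thesis
    by (simp add: measurable_def)
qed

lemma sets_close_pair_event:
  assumes "i < d" "j < d"
  shows "close_pair_event d \<delta> i j \<in> sets (unif_cube d)"
proof -
  note [measurable] = measurable_unif_cube_component[OF assms(1)]
    measurable_unif_cube_component[OF assms(2)]
  show ?thesis
    unfolding close_pair_event_def by measurable
qed

definition off_diagonal :: "nat \<Rightarrow> (nat \<times> nat) set" where
  "off_diagonal d = {p \<in> {..<d} \<times> {..<d}. fst p \<noteq> snd p}"

lemma sets_some_close_pair:
  "(\<Union>p\<in>off_diagonal d. close_pair_event d \<delta> (fst p) (snd p)) \<in> sets (unif_cube d)"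
  unfolding off_diagonal_def by (intro sets.finite_UN) (auto intro: sets_close_pair_event)

lemma measure_some_close_pair:
  assumes "0 < \<delta>"
  shows "measure (unif_cube d) (\<Union>p\<in>off_diagonal d. close_pair_event d \<delta> (fst p) (snd p))
    \<le> real d ^ 2 * (3 * \<delta>)"
proof -
  have "measure (unif_cube d) (\<Union>p\<in>off_diagonal d. close_pair_event d \<delta> (fst p) (snd p))
      \<le> (\<Sum>p\<in>off_diagonal d. measure (unif_cube d) (close_pair_event d \<delta> (fst p) (snd p)))"
    by (intro measure_UNION_le) (auto simp: off_diagonal_def intro: sets_close_pair_event)
  also have "\<dots> \<le> (\<Sum>p\<in>off_diagonal d. 3 * \<delta>)"
    using assms by (intro sum_mono measure_close_pair_event) (auto simp: off_diagonal_def)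
  also have "\<dots> = real (card (off_diagonal d)) * (3 * \<delta>)"
    by simp
  also have "\<dots> \<le> real d ^ 2 * (3 * \<delta>)"
  proof (rule mult_right_mono)
    have "card (off_diagonal d) \<le> card ({..<d} \<times> {..<d})"
      unfolding off_diagonal_def by (intro card_mono) auto
    then show "real (card (off_diagonal d)) \<le> real d ^ 2"
      by (simp add: power2_eq_square flip: of_nat_mult)
  qed (use assms in simp)
  finally show ?thesis .
qed

section \<open>The median network\<close>

lemma sum_lessThan_mult_blocks:
  fixes f :: "nat \<Rightarrow> 'a::comm_monoid_add"
  shows "(\<Sum>n<a * b. f n) = (\<Sum>u<a. \<Sum>v<b. f (u * b + v))"
proof -
  have "sum f {u * b..<u * b + b} = (\<Sum>v<b. f (u * b + v))" for u
    using sum.shift_bounds_nat_ivl[of f 0 "u * b" b] by (simp add: atLeast0LessThan add.commute)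
  then show ?thesis
    using sum.nat_group[of f b a] by simp
qed

definition gate :: "real \<Rightarrow> real \<Rightarrow> real" where
  "gate y t = relu (y + t) - relu t - relu (y + t - 1) + relu (t - 1)"

lemma abs_gate_le_1:
  "0 \<le> y \<Longrightarrow> y \<le> 1 \<Longrightarrow> \<bar>gate y t\<bar> \<le> 1"
  unfolding gate_def relu_def by (simp add: max_def)

lemma gate_of_int:
  assumes "0 \<le> y" "y \<le> 1"
  shows "gate y (of_int k) = (if k = 0 then y else 0)"
proof -
  consider "k = 0" | "1 \<le> real_of_int k" | "real_of_int k \<le> -1"
    by linarith
  then show ?thesis
    by cases (use assms in \<open>auto simp: gate_def relu_def\<close>)
qed

lemma relu_ramp_eq_step:
  assumes "0 < M" and "a = 0 \<or> 1 / M \<le> \<bar>a\<bar>"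
  shows "relu (M * a) - relu (M * a - 1) = of_bool (0 < a)"
proof (cases "0 < a")
  case True
  then have "1 \<le> M * a"
    using assms by (auto simp: field_simps)
  then show ?thesis
    using True by (simp add: relu_def)
next
  case False
  then have "M * a \<le> 0"
    using assms(1) by (simp add: mult_nonneg_nonpos)
  then show ?thesis
    using False by (simp add: relu_def)
qed

definition soft_rank :: "real \<Rightarrow> nat \<Rightarrow> (nat \<Rightarrow> real) \<Rightarrow> real \<Rightarrow> real" where
  "soft_rank M d x y = (\<Sum>v<d. relu (M * (y - x v)) - relu (M * (y - x v) - 1))"

definition separated :: "nat \<Rightarrow> real \<Rightarrow> (nat \<Rightarrow> real) \<Rightarrow> bool" where
  "separated d \<delta> x \<longleftrightarrow> (\<forall>i<d. \<forall>j<d. i \<noteq> j \<longrightarrow> \<delta> \<le> \<bar>x i - x j\<bar>)"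

lemma separated_imp_inj_on:
  "0 < \<delta> \<Longrightarrow> separated d \<delta> x \<Longrightarrow> inj_on x {..<d}"
  unfolding separated_def inj_on_def by force

lemma soft_rank_eq_count_below:
  assumes "0 < M" "separated d (1 / M) x" "i < d"
  shows "soft_rank M d x (x i) = real (count_below d x (x i))"
proof -
  have "soft_rank M d x (x i) = (\<Sum>v<d. of_bool (x v < x i))"
    unfolding soft_rank_def using assms
    by (intro sum.cong refl) (subst relu_ramp_eq_step, auto simp: separated_def)
  then show ?thesis
    by (simp add: count_below_def Int_def conj_commute)
qed

text \<open>First layer: neuron u * d + v (u \<le> 2 d, v < d) computes
  relu(M (x u - x v)) for u < d, relu(M (x (u - d) - x v) - 1) for d \<le> u < 2 d, and
  relu(x v) for u = 2 d. Second layer: neuron w * d + i (w < 8, i < d) computes one of the four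
  ReLU terms of the gate of x i at the median index (d - 1 + w div 4) div 2, selected by
  w mod 4; the output weights \<plusminus>1/2 average the two gates.\<close>
definition median_W1 :: "nat \<Rightarrow> real \<Rightarrow> nat \<Rightarrow> nat \<Rightarrow> real" where
  "median_W1 d M n l = (let u = n div d; v = n mod d in
     if u < d then M * (of_bool (l = u) - of_bool (l = v))
     else if u < 2 * d then M * (of_bool (l = u - d) - of_bool (l = v))
     else of_bool (l = v))"

definition median_b1 :: "nat \<Rightarrow> nat \<Rightarrow> real" where
  "median_b1 d n = - of_bool (d \<le> n div d \<and> n div d < 2 * d)"

definition median_W2 :: "nat \<Rightarrow> nat \<Rightarrow> nat \<Rightarrow> real" where
  "median_W2 d m n = (let i = m mod d; u = n div d; v = n mod d in
     if u < d then of_bool (u = i)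
     else if u < 2 * d then - of_bool (u - d = i)
     else of_bool (v = i \<and> even (m div d)))"

definition median_b2 :: "nat \<Rightarrow> nat \<Rightarrow> real" where
  "median_b2 d m = - real ((d - 1 + m div d div 4) div 2) - of_bool (2 \<le> m div d mod 4)"

definition median_w3 :: "nat \<Rightarrow> nat \<Rightarrow> real" where
  "median_w3 d m = (if m div d mod 4 \<in> {0, 3} then 1 / 2 else - 1 / 2)"

definition median_net :: "nat \<Rightarrow> real \<Rightarrow> (nat \<Rightarrow> real) \<Rightarrow> real" where
  "median_net d M = net3 d ((2 * d + 1) * d) (8 * d) (median_W1 d M) (median_b1 d)
     (median_W2 d) (median_b2 d) (median_w3 d) 0"

lemma median_net_layer1:
  assumes "u < 2 * d + 1" "v < d"
  shows "relu ((\<Sum>l<d. median_W1 d M (u * d + v) l * x l) + median_b1 d (u * d + v)) =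
    (if u < d then relu (M * (x u - x v))
     else if u < 2 * d then relu (M * (x (u - d) - x v) - 1)
     else relu (x v))"
  using assms
  by (simp add: median_W1_def median_b1_def Let_def sum_subtractf algebra_simps
      sum_distrib_left[symmetric])

lemma median_net_layer2:
  assumes "w < 8" "i < d"
  shows "(\<Sum>n<(2 * d + 1) * d. median_W2 d (w * d + i) n *
      relu ((\<Sum>l<d. median_W1 d M n l * x l) + median_b1 d n)) =
    soft_rank M d x (x i) + of_bool (even w) * relu (x i)"
proof -
  have [simp]: "(w * d + i) div d = w" "(w * d + i) mod d = i"
    and block [simp]: "v < d \<Longrightarrow> (u * d + v) div d = u" "v < d \<Longrightarrow> (u * d + v) mod d = v" for u v
    using assms by auto
  define G where "G u = (\<Sum>v<d. median_W2 d (w * d + i) (u * d + v) *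
      (if u < d then relu (M * (x u - x v))
       else if u < 2 * d then relu (M * (x (u - d) - x v) - 1)
       else relu (x v)))" for u
  have "(\<Sum>n<(2 * d + 1) * d. median_W2 d (w * d + i) n *
      relu ((\<Sum>l<d. median_W1 d M n l * x l) + median_b1 d n)) = (\<Sum>u<2 * d + 1. G u)"
    unfolding sum_lessThan_mult_blocks G_def by (intro sum.cong refl) (simp add: median_net_layer1)
  also have "\<dots> = (\<Sum>u<d. G u) + (\<Sum>u<d. G (d + u)) + G (2 * d)"
    using sum_lessThan_mult_blocks[of G 2 d] by (simp add: eval_nat_numeral)
  also have "(\<Sum>u<d. G u) = (\<Sum>v<d. relu (M * (x i - x v)))"
    using assms(2) by (simp add: G_def median_W2_def sum_distrib_left[symmetric])
  also have "(\<Sum>u<d. G (d + u)) = - (\<Sum>v<d. relu (M * (x i - x v) - 1))"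
    using assms(2) by (simp add: G_def median_W2_def sum_distrib_left[symmetric] sum_negf)
  also have "G (2 * d) = of_bool (even w) * relu (x i)"
    using assms(2) by (simp add: G_def median_W2_def)
  finally show ?thesis
    by (simp add: soft_rank_def sum_subtractf)
qed

lemma sum_median_output_neurons:
  assumes "i < d"
  shows "(\<Sum>w<8. median_w3 d (w * d + i) *
      relu (soft_rank M d x (x i) + of_bool (even w) * relu (x i) + median_b2 d (w * d + i))) =
    (gate (relu (x i)) (soft_rank M d x (x i) - real ((d - 1) div 2)) +
     gate (relu (x i)) (soft_rank M d x (x i) - real (d div 2))) / 2"
proof -
  define y where "y = relu (x i)"
  define t where "t q = soft_rank M d x (x i) - real ((d - 1 + q) div 2)" for q
  define T where "T w = (if w mod 4 \<in> {0, 3} then 1 / 2 else - 1 / 2) *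
      relu (of_bool (even w) * y + t (w div 4) - of_bool (2 \<le> w mod 4))" for w :: nat
  have "median_w3 d (w * d + i) *
      relu (soft_rank M d x (x i) + of_bool (even w) * y + median_b2 d (w * d + i)) = T w" for w
    using assms by (simp add: T_def median_w3_def median_b2_def t_def algebra_simps)
  moreover have "(\<Sum>w<8. T w) = T 0 + T 1 + T 2 + T 3 + T 4 + T 5 + T 6 + T 7"
    by (simp add: eval_nat_numeral ac_simps)
  moreover have "d - 1 + 1 = d"
    using assms by simp
  ultimately show ?thesis
    by (simp add: T_def gate_def y_def t_def)
qed

lemma median_net_eq_gates:
  "median_net d M x = (\<Sum>i<d.
     (gate (relu (x i)) (soft_rank M d x (x i) - real ((d - 1) div 2)) +
      gate (relu (x i)) (soft_rank M d x (x i) - real (d div 2))) / 2)"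
proof -
  have "median_net d M x = (\<Sum>w<8. \<Sum>i<d. median_w3 d (w * d + i) *
      relu ((\<Sum>n<(2 * d + 1) * d. median_W2 d (w * d + i) n *
      relu ((\<Sum>l<d. median_W1 d M n l * x l) + median_b1 d n)) + median_b2 d (w * d + i)))"
    unfolding median_net_def net3_def add_0_right sum_lessThan_mult_blocks[of _ 8 d] ..
  also have "\<dots> = (\<Sum>w<8. \<Sum>i<d. median_w3 d (w * d + i) *
      relu (soft_rank M d x (x i) + of_bool (even w) * relu (x i) + median_b2 d (w * d + i)))"
    using median_net_layer2 by (intro sum.cong refl) auto
  also have "\<dots> = (\<Sum>i<d. \<Sum>w<8. median_w3 d (w * d + i) *
      relu (soft_rank M d x (x i) + of_bool (even w) * relu (x i) + median_b2 d (w * d + i)))"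
    by (rule sum.swap)
  also have "\<dots> = (\<Sum>i<d.
     (gate (relu (x i)) (soft_rank M d x (x i) - real ((d - 1) div 2)) +
      gate (relu (x i)) (soft_rank M d x (x i) - real (d div 2))) / 2)"
    using sum_median_output_neurons by (intro sum.cong refl) auto
  finally show ?thesis .
qed

lemma abs_median_net_le:
  assumes "\<forall>i<d. 0 \<le> x i \<and> x i \<le> 1"
  shows "\<bar>median_net d M x\<bar> \<le> d"
proof -
  have "\<bar>(gate (relu (x i)) s + gate (relu (x i)) t) / 2\<bar> \<le> 1" if "i < d" for i s t
  proof -
    have "relu (x i) = x i" "0 \<le> x i" "x i \<le> 1"
      using assms that by (auto simp: relu_def)
    then show ?thesis
      using abs_gate_le_1[of "x i" s] abs_gate_le_1[of "x i" t] by simp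
  qed
  then have "\<bar>median_net d M x\<bar> \<le> (\<Sum>i<d. 1)"
    unfolding median_net_eq_gates by (intro order.trans[OF sum_abs] sum_mono) simp
  then show ?thesis
    by simp
qed

lemma median_net_eq_med:
  assumes d: "1 \<le> d" and M: "0 < M" and unit: "\<forall>i<d. 0 \<le> x i \<and> x i \<le> 1"
    and sep: "separated d (1 / M) x"
  shows "median_net d M x = med d x"
proof -
  have gate_rank: "gate (relu (x i)) (soft_rank M d x (x i) - real r) =
      (if count_below d x (x i) = r then x i else 0)" if i: "i < d" for i r
    using gate_of_int[of "x i" "int (count_below d x (x i)) - int r"] unit i
      soft_rank_eq_count_below[OF M sep i] by (simp add: relu_def)
  have "median_net d M x = ((\<Sum>i<d. if count_below d x (x i) = (d - 1) div 2 then x i else 0) +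
      (\<Sum>i<d. if count_below d x (x i) = d div 2 then x i else 0)) / 2"
    unfolding median_net_eq_gates by (simp add: gate_rank sum.distrib flip: sum_divide_distrib)
  also have "\<dots> = med d x"
    using d separated_imp_inj_on[OF _ sep] M
    by (simp add: sum_coords_of_rank med_eq_sorted_coords)
  finally show ?thesis .
qed

lemma measurable_median_net [measurable]:
  "(\<lambda>x. median_net d M x) \<in> borel_measurable (unif_cube d)"
  unfolding median_net_def net3_def relu_def unif_cube_def by measurable

lemma median_net_params_bounded:
  assumes "1 \<le> d" "real d \<le> M"
  shows "params_bounded d ((2 * d + 1) * d) (8 * d) (median_W1 d M) (median_b1 d)
    (median_W2 d) (median_b2 d) (median_w3 d) 0 M"
proof -
  have "\<bar>median_b2 d m\<bar> \<le> M" if "m < 8 * d" for m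
  proof -
    have "m div d < 8"
      using that by (rule less_mult_imp_div_less)
    then have "m div d div 4 \<le> 1"
      using less_mult_imp_div_less[of "m div d" 2 4] by simp
    then have "(d - 1 + m div d div 4) div 2 + 1 \<le> d"
      using assms(1) by linarith
    then show ?thesis
      using assms by (simp add: median_b2_def)
  qed
  then show ?thesis
    using assms
    by (auto simp: params_bounded_def median_W1_def median_b1_def median_W2_def median_w3_def
        Let_def abs_mult)
qed

section \<open>Approximation error\<close>

lemma sq_error_median_net_le:
  assumes "1 \<le> d" and "\<forall>i<d. 0 \<le> x i \<and> x i \<le> 1"
  shows "(median_net d M x - med d x)\<^sup>2 \<le> 4 * real d ^ 2"
proof -
  have "\<bar>median_net d M x - med d x\<bar> \<le> 2 * real d"
    using abs_median_net_le[OF assms(2), of M] med_between[OF assms] assms(1)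
    by (auto simp: abs_le_iff)
  then have "\<bar>median_net d M x - med d x\<bar>\<^sup>2 \<le> (2 * real d)\<^sup>2"
    by (rule power_mono) simp
  then show ?thesis
    by (simp add: power_mult_distrib)
qed

lemma (in finite_measure) integral_le_bound_times_measure:
  fixes f :: "'a \<Rightarrow> real"
  assumes f: "f \<in> borel_measurable M" and A: "A \<in> sets M"
    and bound: "AE x in M. 0 \<le> f x \<and> f x \<le> C * indicator A x"
  shows "integrable M f \<and> integral\<^sup>L M f \<le> C * measure M A"
proof
  have "AE x in M. norm (f x) \<le> \<bar>C\<bar>"
    using bound by eventually_elim (auto split: split_indicator_asm)
  then show int: "integrable M f"
    using f by (rule integrable_const_bound)
  have "integrable M (indicator A :: 'a \<Rightarrow> real)"
    using A by (simp add: less_top[symmetric])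
  then have "integral\<^sup>L M f \<le> (\<integral>x. C * indicator A x \<partial>M)"
    using bound by (intro integral_mono_AE int) (auto elim: eventually_mono)
  also have "\<dots> = C * measure M A"
    using A by (simp add: Int_absorb2 sets.sets_into_space)
  finally show "integral\<^sup>L M f \<le> C * measure M A" .
qed

lemma expected_sq_error_median_net:
  assumes d: "1 \<le> d" and M: "0 < M"
  shows "integrable (unif_cube d) (\<lambda>x. (median_net d M x - med d x)\<^sup>2) \<and>
    (\<integral>x. (median_net d M x - med d x)\<^sup>2 \<partial>unif_cube d) \<le> 12 * real d ^ 4 / M"
proof -
  interpret prob_space "unif_cube d"
    by (rule prob_space_unif_cube)
  define E where "E = (\<Union>p\<in>off_diagonal d. close_pair_event d (1 / M) (fst p) (snd p))"
  have "AE x in unif_cube d. 0 \<le> (median_net d M x - med d x)\<^sup>2 \<and>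
      (median_net d M x - med d x)\<^sup>2 \<le> 4 * real d ^ 2 * indicator E x"
    using AE_unif_cube_unit AE_space
  proof eventually_elim
    case (elim x)
    show ?case
    proof (cases "separated d (1 / M) x")
      case True
      then show ?thesis
        using median_net_eq_med[OF d M elim(1)] by simp
    next
      case False
      then have "x \<in> E"
        using elim by (force simp: separated_def E_def off_diagonal_def close_pair_event_def)
      then show ?thesis
        using sq_error_median_net_le[OF d elim(1)] by simp
    qed
  qed
  then have bound: "integrable (unif_cube d) (\<lambda>x. (median_net d M x - med d x)\<^sup>2) \<and>
      (\<integral>x. (median_net d M x - med d x)\<^sup>2 \<partial>unif_cube d) \<le> 4 * real d ^ 2 * measure (unif_cube d) E"
    using d sets_some_close_pair unfolding E_def by (intro integral_le_bound_times_measure) auto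
  have "4 * real d ^ 2 * measure (unif_cube d) E \<le> 4 * real d ^ 2 * (real d ^ 2 * (3 * (1 / M)))"
    using measure_some_close_pair[of "1 / M" d] M unfolding E_def by (intro mult_left_mono) auto
  also have "\<dots> = 12 * real d ^ 4 / M"
    by (simp add: power2_eq_square power4_eq_xxxx)
  finally show ?thesis
    using bound by (meson order.trans)
qed

lemma expected_sq_med_le_1:
  assumes "1 \<le> d"
  shows "integrable (unif_cube d) (\<lambda>x. (med d x)\<^sup>2) \<and> (\<integral>x. (med d x)\<^sup>2 \<partial>unif_cube d) \<le> 1"
proof -
  interpret prob_space "unif_cube d"
    by (rule prob_space_unif_cube)
  have "AE x in unif_cube d. 0 \<le> (med d x)\<^sup>2 \<and> (med d x)\<^sup>2 \<le> 1 * indicator (space (unif_cube d)) x"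
    using AE_unif_cube_unit AE_space
    by eventually_elim (use med_between[OF assms, of 0 _ 1] in \<open>auto intro!: power_le_one\<close>)
  then have "integrable (unif_cube d) (\<lambda>x. (med d x)\<^sup>2) \<and>
      (\<integral>x. (med d x)\<^sup>2 \<partial>unif_cube d) \<le> 1 * measure (unif_cube d) (space (unif_cube d))"
    using assms by (intro integral_le_bound_times_measure) auto
  then show ?thesis
    by (simp add: prob_space)
qed

lemma median_net_width:
  assumes "1 \<le> d"
  shows "real (max ((2 * d + 1) * d) (8 * d)) \<le> 8 * real d ^ 2"
proof -
  have "max ((2 * d + 1) * d) (8 * d) \<le> 8 * d ^ 2"
    using assms by (simp add: power2_eq_square)
  then have "real (max ((2 * d + 1) * d) (8 * d)) \<le> real (8 * d ^ 2)"
    by (rule of_nat_mono)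
  then show ?thesis
    by simp
qed

lemma dim_le_weight_bound:
  assumes "1 \<le> d" "0 < \<epsilon>" "\<epsilon> < 1"
  shows "real d \<le> 12 * real d ^ 4 / \<epsilon>"
proof -
  have "\<epsilon> * real d \<le> real d"
    using assms(2,3) by (intro mult_left_le_one_le) auto
  also have "\<dots> \<le> real d ^ 4"
    using assms(1) by (intro self_le_power) auto
  also have "\<dots> \<le> 12 * real d ^ 4"
    by simp
  finally show ?thesis
    using assms(2) by (simp add: field_simps)
qed

theorem theorem3p1:
  "\<exists>C::real. \<forall>d::nat. \<forall>\<epsilon>::real. d \<ge> 1 \<longrightarrow> \<epsilon> > 0 \<longrightarrow>
     (\<exists>k1 k2 W1 b1 W2 b2 w3 b3.
        real (max k1 k2) \<le> C * real d ^ 2 \<and>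
        params_bounded d k1 k2 W1 b1 W2 b2 w3 b3 (12 * real d ^ 4 / \<epsilon>) \<and>
        integrable (unif_cube d) (\<lambda>x. (net3 d k1 k2 W1 b1 W2 b2 w3 b3 x - med d x)\<^sup>2) \<and>
        (\<integral>x. (net3 d k1 k2 W1 b1 W2 b2 w3 b3 x - med d x)\<^sup>2 \<partial>unif_cube d) \<le> \<epsilon>)"
proof (rule exI[of _ 8], intro allI impI)
  fix d :: nat and \<epsilon> :: real
  assume d: "d \<ge> 1" and \<epsilon>: "\<epsilon> > 0"
  show "\<exists>k1 k2 W1 b1 W2 b2 w3 b3.
        real (max k1 k2) \<le> 8 * real d ^ 2 \<and>
        params_bounded d k1 k2 W1 b1 W2 b2 w3 b3 (12 * real d ^ 4 / \<epsilon>) \<and>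
        integrable (unif_cube d) (\<lambda>x. (net3 d k1 k2 W1 b1 W2 b2 w3 b3 x - med d x)\<^sup>2) \<and>
        (\<integral>x. (net3 d k1 k2 W1 b1 W2 b2 w3 b3 x - med d x)\<^sup>2 \<partial>unif_cube d) \<le> \<epsilon>"
  proof (cases "\<epsilon> < 1")
    case True
    define M where "M = 12 * real d ^ 4 / \<epsilon>"
    have M_ge: "real d \<le> M" and M: "0 < M" and accuracy: "12 * real d ^ 4 / M = \<epsilon>"
      using dim_le_weight_bound[OF d \<epsilon> True] d \<epsilon> by (auto simp: M_def)
    show ?thesis
      using median_net_width[OF d] median_net_params_bounded[OF d M_ge]
        expected_sq_error_median_net[OF d M]
      unfolding median_net_def accuracy M_def[symmetric] by blast
  next
    (* For \<epsilon> \<ge> 1 the weight bound may be below the biases of the median network,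
       but the zero network already has error E[med^2] \<le> 1. *)
    case False
    then show ?thesis
      using expected_sq_med_le_1[OF d] \<epsilon>
      by (intro exI[of _ 0] exI[of _ "\<lambda>_ _. 0"] exI[of _ "\<lambda>_. 0"])
        (auto simp: net3_def params_bounded_def)
  qed
qed

end
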